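(* Let $E$ be a Bratteli diagram with levels $(V_n)_{n\ge 0}$ such that $k_{vw} := |vE^1w| > n$ for every $n\in\mathbb{N}$, $v\in V_n$ and $w\in V_{n+1}$, and let $G$ be its graph groupoid. For each such $v,w$ label $vE^1w = \{(vw)_0,\dots,(vw)_{k_{vw}-1}\}$ and let $\alpha$ be the graph automorphism of $E$ fixing every vertex with $\alpha((vw)_i) = (vw)_{(i+1) \bmod k_{vw}}$. Then there is an automorphism $\alpha$ of the topological groupoid $G$ with $\alpha(x,m,y) = (\alpha(x), m, \alpha(y))$ for $(x,m,y)\in G$ (where $\alpha(x)_i = \alpha(x_i)$), and this automorphism satisfies: (W) if $x\in G^{(0)}$ and $l\in\mathbb{Z}$ satisfy $[x]=[\alpha^l(x)]$ then $l=0$; and (L) there is a basis $\mathcal{B}$ for the topology on $G^{(0)}$ of compact open bisections such that for every $V\in\mathcal{B}$ there is $l\ge1$ with $\alpha^{-l}(V)\subseteq V$.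
   Context: A Bratteli diagram is a row-finite directed graph $E$ (countable vertex set $E^0$, edge set $E^1$, maps $r,s:E^1\to E^0$) whose vertex set is partitioned into finite sets $V_n$, $n=0,1,2,\dots$, with $E^1 = \bigcup_n V_nE^1V_{n+1}$ (here $vE^1w = \{e : r(e)=v, s(e)=w\}$), such that $vE^1\ne\emptyset$ for all $v\in E^0$ and $E^1v\ne\emptyset$ for all $v\notin V_0$. Infinite paths are sequences $x = x_1x_2\dots$ of edges with $s(x_i)=r(x_{i+1})$; $E^\infty$ is the set of them, and $\sigma^n(x) = x_{n+1}x_{n+2}\dots$. For a finite path $\mu$, $Z(\mu) = \{x\in E^\infty : x \text{ begins with } \mu\}$. The graph groupoid is $G = \{(x,m-n,y) : x,y\in E^\infty, \sigma^m(x)=\sigma^n(y)\}$ with $(x,k,y)(y,l,z)=(x,k+l,z)$, $(x,k,y)^{-1}=(y,-k,x)$, unit space identified with $E^\infty$, and topology with basic open sets $Z(\mu,\nu)=\{(\mu z, |\mu|-|\nu|, \nu z) : z\in E^\infty\}$ for finite paths $\mu,\nu$ with $s(\mu)=s(\nu)$. For $u\in G^{(0)}$, $[u]=\{r(g): s(g)=u\}$. *)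

theory Defs
  imports "HOL-Analysis.Analysis"
begin

definition bratteli_diagram ::
  "(nat \<Rightarrow> 'v set) \<Rightarrow> 'e set \<Rightarrow> ('e \<Rightarrow> 'v) \<Rightarrow> ('e \<Rightarrow> 'v) \<Rightarrow> bool" where
  "bratteli_diagram V E1 r s \<longleftrightarrow>
     (\<forall>n. finite (V n)) \<and>
     (\<forall>m n. m \<noteq> n \<longrightarrow> V m \<inter> V n = {}) \<and>
     (\<forall>e\<in>E1. \<exists>n. r e \<in> V n \<and> s e \<in> V (Suc n)) \<and>
     (\<forall>v\<in>(\<Union>n. V n). finite {e\<in>E1. r e = v}) \<and>
     (\<forall>v\<in>(\<Union>n. V n). {e\<in>E1. r e = v} \<noteq> {}) \<and>
     (\<forall>n. \<forall>v\<in>V (Suc n). {e\<in>E1. s e = v} \<noteq> {})"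

definition edges_between :: "'e set \<Rightarrow> ('e \<Rightarrow> 'v) \<Rightarrow> ('e \<Rightarrow> 'v) \<Rightarrow> 'v \<Rightarrow> 'v \<Rightarrow> 'e set" where
  "edges_between E1 r s v w = {e\<in>E1. r e = v \<and> s e = w}"

definition kk :: "'e set \<Rightarrow> ('e \<Rightarrow> 'v) \<Rightarrow> ('e \<Rightarrow> 'v) \<Rightarrow> 'v \<Rightarrow> 'v \<Rightarrow> nat" where
  "kk E1 r s v w = card (edges_between E1 r s v w)"

definition inf_paths :: "'e set \<Rightarrow> ('e \<Rightarrow> 'v) \<Rightarrow> ('e \<Rightarrow> 'v) \<Rightarrow> (nat \<Rightarrow> 'e) set" where
  "inf_paths E1 r s = {x. (\<forall>i. x i \<in> E1) \<and> (\<forall>i. s (x i) = r (x (Suc i)))}"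

definition shift :: "nat \<Rightarrow> (nat \<Rightarrow> 'e) \<Rightarrow> (nat \<Rightarrow> 'e)" where
  "shift n x = (\<lambda>i. x (i + n))"

definition graph_groupoid ::
  "'e set \<Rightarrow> ('e \<Rightarrow> 'v) \<Rightarrow> ('e \<Rightarrow> 'v) \<Rightarrow> ((nat \<Rightarrow> 'e) \<times> int \<times> (nat \<Rightarrow> 'e)) set" where
  "graph_groupoid E1 r s =
     {(x, int m - int n, y) | x y m n. x \<in> inf_paths E1 r s \<and> y \<in> inf_paths E1 r s \<and>
                                      shift m x = shift n y}"

definition gmult :: "('a \<times> int \<times> 'a) \<Rightarrow> ('a \<times> int \<times> 'a) \<Rightarrow> ('a \<times> int \<times> 'a)" where
  "gmult g h = (fst g, fst (snd g) + fst (snd h), snd (snd h))"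

definition ginv :: "('a \<times> int \<times> 'a) \<Rightarrow> ('a \<times> int \<times> 'a)" where
  "ginv g = (snd (snd g), - fst (snd g), fst g)"

definition grange :: "('a \<times> int \<times> 'a) \<Rightarrow> ('a \<times> int \<times> 'a)" where
  "grange g = (fst g, 0, fst g)"

definition gsource :: "('a \<times> int \<times> 'a) \<Rightarrow> ('a \<times> int \<times> 'a)" where
  "gsource g = (snd (snd g), 0, snd (snd g))"

definition gunits ::
  "'e set \<Rightarrow> ('e \<Rightarrow> 'v) \<Rightarrow> ('e \<Rightarrow> 'v) \<Rightarrow> ((nat \<Rightarrow> 'e) \<times> int \<times> (nat \<Rightarrow> 'e)) set" where
  "gunits E1 r s = {(x, 0, x) | x. x \<in> inf_paths E1 r s}"

text \<open>Finite path mu with source u: a vertex u (mu = []) or consecutive edges with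
  s(last mu) = u.\<close>
definition fin_path :: "'v set \<Rightarrow> 'e set \<Rightarrow> ('e \<Rightarrow> 'v) \<Rightarrow> ('e \<Rightarrow> 'v) \<Rightarrow> 'v \<Rightarrow> 'e list \<Rightarrow> bool" where
  "fin_path E0 E1 r s u mu \<longleftrightarrow> u \<in> E0 \<and> set mu \<subseteq> E1 \<and>
     (\<forall>i. Suc i < length mu \<longrightarrow> s (mu ! i) = r (mu ! Suc i)) \<and>
     (mu \<noteq> [] \<longrightarrow> s (last mu) = u)"

definition pcat :: "'e list \<Rightarrow> (nat \<Rightarrow> 'e) \<Rightarrow> (nat \<Rightarrow> 'e)" where
  "pcat mu z = (\<lambda>i. if i < length mu then mu ! i else z (i - length mu))"

definition Zset :: "'e set \<Rightarrow> ('e \<Rightarrow> 'v) \<Rightarrow> ('e \<Rightarrow> 'v) \<Rightarrow> 'e list \<Rightarrow> 'e list \<Rightarrow> 'v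
                    \<Rightarrow> ((nat \<Rightarrow> 'e) \<times> int \<times> (nat \<Rightarrow> 'e)) set" where
  "Zset E1 r s mu nu u =
     {(pcat mu z, int (length mu) - int (length nu), pcat nu z) | z.
        z \<in> inf_paths E1 r s \<and> r (z 0) = u}"

definition groupoid_top :: "'v set \<Rightarrow> 'e set \<Rightarrow> ('e \<Rightarrow> 'v) \<Rightarrow> ('e \<Rightarrow> 'v)
                             \<Rightarrow> ((nat \<Rightarrow> 'e) \<times> int \<times> (nat \<Rightarrow> 'e)) topology" where
  "groupoid_top E0 E1 r s = topology_generated_by
     {Zset E1 r s mu nu u | mu nu u. fin_path E0 E1 r s u mu \<and> fin_path E0 E1 r s u nu}"

definition groupoid_automorphism :: "('a \<times> int \<times> 'a) set \<Rightarrow> (('a \<times> int \<times> 'a) \<Rightarrow> ('a \<times> int \<times> 'a)) \<Rightarrow> bool" where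
  "groupoid_automorphism G f \<longleftrightarrow> bij_betw f G G \<and>
     (\<forall>g\<in>G. \<forall>h\<in>G. gsource g = grange h \<longrightarrow> f (gmult g h) = gmult (f g) (f h)) \<and>
     (\<forall>g\<in>G. f (ginv g) = ginv (f g))"

definition bisection :: "('a \<times> int \<times> 'a) set \<Rightarrow> ('a \<times> int \<times> 'a) set \<Rightarrow> bool" where
  "bisection G B \<longleftrightarrow> B \<subseteq> G \<and> inj_on grange B \<and> inj_on gsource B"

definition gorbit :: "('a \<times> int \<times> 'a) set \<Rightarrow> ('a \<times> int \<times> 'a) \<Rightarrow> ('a \<times> int \<times> 'a) set" where
  "gorbit G u = {grange g | g. g \<in> G \<and> gsource g = u}"

definition gpow :: "('a \<times> int \<times> 'a) set \<Rightarrow> (('a \<times> int \<times> 'a) \<Rightarrow> ('a \<times> int \<times> 'a)) \<Rightarrow> int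
                    \<Rightarrow> ('a \<times> int \<times> 'a) \<Rightarrow> ('a \<times> int \<times> 'a)" where
  "gpow G f l = (if 0 \<le> l then f ^^ nat l else inv_into G f ^^ nat (- l))"

text \<open>The graph automorphism alpha of E: fixes vertices, sends (vw)_i to (vw)_{(i+1) mod k_vw},
  where lab e = i is the label of edge e = (vw)_i.\<close>
definition rot_edge :: "'e set \<Rightarrow> ('e \<Rightarrow> 'v) \<Rightarrow> ('e \<Rightarrow> 'v) \<Rightarrow> ('e \<Rightarrow> nat) \<Rightarrow> 'e \<Rightarrow> 'e" where
  "rot_edge E1 r s lab e = (THE e'. e' \<in> edges_between E1 r s (r e) (s e) \<and>
                              lab e' = (lab e + 1) mod kk E1 r s (r e) (s e))"

definition alpha_G :: "'e set \<Rightarrow> ('e \<Rightarrow> 'v) \<Rightarrow> ('e \<Rightarrow> 'v) \<Rightarrow> ('e \<Rightarrow> nat)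
                       \<Rightarrow> ((nat \<Rightarrow> 'e) \<times> int \<times> (nat \<Rightarrow> 'e)) \<Rightarrow> ((nat \<Rightarrow> 'e) \<times> int \<times> (nat \<Rightarrow> 'e))" where
  "alpha_G E1 r s lab g =
     (rot_edge E1 r s lab \<circ> fst g, fst (snd g), rot_edge E1 r s lab \<circ> snd (snd g))"

end

theory Submission
  imports Defs
begin

text \<open>Let \<open>\<rho>\<^sub>l\<close> rotate every set \<open>vE\<^sup>1w\<close> of parallel edges by \<open>l\<close> labels. Then \<open>\<alpha>\<^sup>l\<close> applies
  \<open>\<rho>\<^sub>l\<close> edgewise, and \<open>\<rho>\<^sub>l\<close> fixes an edge of \<open>vE\<^sup>1w\<close> exactly when \<open>k\<^sub>v\<^sub>w\<close> divides \<open>l\<close>.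

  (W) If \<open>x\<close> and \<open>\<alpha>\<^sup>l(x)\<close> lie in the same orbit, they have equal tails up to a lag; as \<open>\<alpha>\<close>
  fixes vertices and every vertex lies on a single level, the lag is zero. So \<open>\<rho>\<^sub>l\<close> fixes an
  edge of \<open>x\<close> on a level \<open>n > |l|\<close>, where \<open>k\<^sub>v\<^sub>w > n\<close>, and hence \<open>l = 0\<close>.

  (L) The cylinder sets \<open>Z(\<mu>) \<subseteq> G\<^sup>(\<^sup>0\<^sup>)\<close> form the basis. They are compact by Koenig's lemma,
  the diagram being row-finite, and \<open>\<alpha>\<^sup>-\<^sup>L\<close> fixes every path of \<open>Z(\<mu>)\<close> in its first \<open>|\<mu>|\<close>
  edges when \<open>L\<close> is the product of the \<open>k\<^sub>v\<^sub>w\<close> along \<open>\<mu>\<close>.\<close>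

definition path_map ::
    "('e \<Rightarrow> 'e) \<Rightarrow> (nat \<Rightarrow> 'e) \<times> int \<times> (nat \<Rightarrow> 'e) \<Rightarrow> (nat \<Rightarrow> 'e) \<times> int \<times> (nat \<Rightarrow> 'e)" where
  "path_map f g = (f \<circ> fst g, fst (snd g), f \<circ> snd (snd g))"

lemma path_map_comp: "path_map f (path_map h g) = path_map (f \<circ> h) g"
  by (simp add: path_map_def comp_assoc)

lemma alpha_G_eq_path_map: "alpha_G E1 r s lab = path_map (rot_edge E1 r s lab)"
  by (simp add: alpha_G_def path_map_def fun_eq_iff)

lemma comp_pcat: "f \<circ> pcat mu z = pcat (map f mu) (f \<circ> z)"
  by (auto simp: pcat_def fun_eq_iff)

lemma shift_comp: "shift m (f \<circ> x) = f \<circ> shift m x"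
  by (simp add: shift_def fun_eq_iff)

lemma shift_pcat: "shift (length mu) (pcat mu z) = z"
  by (simp add: shift_def pcat_def fun_eq_iff)

lemma bisection_of_units:
  assumes "B \<subseteq> G" "B \<subseteq> gunits E1 r s"
  shows "bisection G B"
proof -
  have "grange g = g \<and> gsource g = g" if "g \<in> B" for g
    using assms(2) that by (auto simp: gunits_def grange_def gsource_def)
  then show ?thesis using assms(1) unfolding bisection_def inj_on_def by simp
qed

definition finitely_covered :: "'a set set \<Rightarrow> 'a set \<Rightarrow> bool" where
  "finitely_covered \<U> C \<longleftrightarrow> (\<exists>\<F>. finite \<F> \<and> \<F> \<subseteq> \<U> \<and> C \<subseteq> \<Union>\<F>)"

lemma finitely_covered_subset: "C \<subseteq> U \<Longrightarrow> U \<in> \<U> \<Longrightarrow> finitely_covered \<U> C"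
  unfolding finitely_covered_def by (intro exI[of _ "{U}"]) auto

lemma finitely_covered_empty: "finitely_covered \<U> {}"
  unfolding finitely_covered_def by blast

lemma finitely_covered_mono: "C \<subseteq> D \<Longrightarrow> finitely_covered \<U> D \<Longrightarrow> finitely_covered \<U> C"
  unfolding finitely_covered_def by blast

lemma finitely_covered_UN:
  assumes "finite I" and "\<And>i. i \<in> I \<Longrightarrow> finitely_covered \<U> (A i)"
  shows "finitely_covered \<U> (\<Union>i\<in>I. A i)"
proof -
  have "\<forall>i\<in>I. \<exists>\<F>. finite \<F> \<and> \<F> \<subseteq> \<U> \<and> A i \<subseteq> \<Union>\<F>"
    using assms(2) unfolding finitely_covered_def by blast
  from bchoice[OF this] obtain \<F> where \<F>: "\<forall>i\<in>I. finite (\<F> i) \<and> \<F> i \<subseteq> \<U> \<and> A i \<subseteq> \<Union>(\<F> i)"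
    by blast
  have "finite (\<Union>i\<in>I. \<F> i)" "(\<Union>i\<in>I. \<F> i) \<subseteq> \<U>"
    using assms(1) \<F> by auto
  moreover have "(\<Union>i\<in>I. A i) \<subseteq> \<Union>(\<Union>i\<in>I. \<F> i)"
  proof (rule UN_least)
    fix i assume "i \<in> I"
    then have "A i \<subseteq> \<Union>(\<F> i)" "\<F> i \<subseteq> (\<Union>i\<in>I. \<F> i)" using \<F> by auto
    then show "A i \<subseteq> \<Union>(\<Union>i\<in>I. \<F> i)" using Union_mono by blast
  qed
  ultimately show ?thesis unfolding finitely_covered_def by (intro exI[of _ "\<Union>i\<in>I. \<F> i"]) simp
qed

lemma compactin_iff_finitely_covered:
  "compactin X S \<longleftrightarrow> S \<subseteq> topspace X \<and>
     (\<forall>\<U>. (\<forall>U\<in>\<U>. openin X U) \<and> S \<subseteq> \<Union>\<U> \<longrightarrow> finitely_covered \<U> S)"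
  by (simp add: compactin_def finitely_covered_def)

lemma mem_graph_groupoid:
  "g \<in> graph_groupoid E1 r s \<longleftrightarrow> fst g \<in> inf_paths E1 r s \<and> snd (snd g) \<in> inf_paths E1 r s \<and>
     (\<exists>m n. fst (snd g) = int m - int n \<and> shift m (fst g) = shift n (snd (snd g)))"
  unfolding graph_groupoid_def by (cases g) auto

locale bratteli_rotation =
  fixes V :: "nat \<Rightarrow> 'v set" and E1 :: "'e set" and r s :: "'e \<Rightarrow> 'v"
    and lab :: "'e \<Rightarrow> nat"
  assumes bratteli: "bratteli_diagram V E1 r s"
    and big: "\<And>n v w. v \<in> V n \<Longrightarrow> w \<in> V (Suc n) \<Longrightarrow> kk E1 r s v w > n"
    and labelling: "\<And>n v w. v \<in> V n \<Longrightarrow> w \<in> V (Suc n) \<Longrightarrow>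
                       bij_betw lab (edges_between E1 r s v w) {..<kk E1 r s v w}"
begin

abbreviation "E0 \<equiv> \<Union>n. V n"
abbreviation "EB e \<equiv> edges_between E1 r s (r e) (s e)"
abbreviation "K e \<equiv> kk E1 r s (r e) (s e)"

lemma edge_level: "e \<in> E1 \<Longrightarrow> \<exists>n. r e \<in> V n \<and> s e \<in> V (Suc n)"
  using bratteli unfolding bratteli_diagram_def by blast

lemma level_unique: "v \<in> V m \<Longrightarrow> v \<in> V n \<Longrightarrow> m = n"
  using bratteli unfolding bratteli_diagram_def by blast

lemma lab_bij: "e \<in> E1 \<Longrightarrow> bij_betw lab (EB e) {..<K e}"
  using edge_level labelling by blast

lemma K_pos: "e \<in> E1 \<Longrightarrow> K e > 0"
  using edge_level big by fastforce

lemma lab_less_K: "e \<in> E1 \<Longrightarrow> lab e < K e"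
  using lab_bij[of e] by (auto simp: bij_betw_def edges_between_def)

lemma EB_iff: "e' \<in> EB e \<longleftrightarrow> e' \<in> E1 \<and> r e' = r e \<and> s e' = s e"
  by (auto simp: edges_between_def)

lemma lab_eqI: "e \<in> E1 \<Longrightarrow> e' \<in> EB e \<Longrightarrow> lab e' = lab e \<Longrightarrow> e' = e"
  using lab_bij[of e] by (auto simp: bij_betw_def inj_on_def edges_between_def)

lemma edge_with_label:
  assumes "e \<in> E1" "i < K e"
  shows "(THE e'. e' \<in> EB e \<and> lab e' = i) \<in> EB e \<and> lab (THE e'. e' \<in> EB e \<and> lab e' = i) = i"
proof (rule theI')
  obtain e' where "e' \<in> EB e" "lab e' = i"
    using assms lab_bij[OF assms(1)] by (metis bij_betw_def imageE lessThan_iff)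
  then show "\<exists>!e'. e' \<in> EB e \<and> lab e' = i"
    using lab_bij[OF assms(1)] unfolding bij_betw_def inj_on_def by blast
qed

definition rot :: "int \<Rightarrow> 'e \<Rightarrow> 'e" where
  "rot l e = (THE e'. e' \<in> EB e \<and> lab e' = nat ((int (lab e) + l) mod int (K e)))"

lemma rot_spec:
  assumes "e \<in> E1"
  shows "rot l e \<in> EB e \<and> int (lab (rot l e)) = (int (lab e) + l) mod int (K e)"
  using edge_with_label[OF assms, of "nat ((int (lab e) + l) mod int (K e))"] K_pos[OF assms]
  by (simp add: rot_def nat_less_iff)

lemma rot_eqI:
  assumes "e \<in> E1" "e' \<in> EB e" "int (lab e') = (int (lab e) + l) mod int (K e)"
  shows "rot l e = e'"
proof -
  have "e' \<in> E1" "r e' = r e" "s e' = s e" using assms(2) by (auto simp: EB_iff)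
  moreover have "rot l e \<in> EB e" "int (lab (rot l e)) = int (lab e')"
    using rot_spec[OF assms(1)] assms(3) by auto
  ultimately show ?thesis using lab_eqI[of e' "rot l e"] by (simp add: EB_iff)
qed

lemma rot_in_E1 [simp]: "e \<in> E1 \<Longrightarrow> rot l e \<in> E1"
  and r_rot [simp]: "e \<in> E1 \<Longrightarrow> r (rot l e) = r e"
  and s_rot [simp]: "e \<in> E1 \<Longrightarrow> s (rot l e) = s e"
  using rot_spec[of e l] by (auto simp: EB_iff)

lemma rot_rot: "e \<in> E1 \<Longrightarrow> rot l (rot m e) = rot (l + m) e"
  using rot_spec[of e m] rot_spec[of "rot m e" l]
  by (intro rot_eqI[symmetric]) (auto simp: EB_iff mod_add_right_eq ac_simps)

lemma rot_fixed_iff: "e \<in> E1 \<Longrightarrow> rot l e = e \<longleftrightarrow> int (K e) dvd l"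
proof -
  assume e: "e \<in> E1"
  have "lab e = (lab e + l) mod K e \<longleftrightarrow> int (K e) dvd l"
    using lab_less_K[OF e] mod_eq_dvd_iff[of "int (lab e)" "int (K e)" "int (lab e) + l"]
    by simp
  moreover have "rot l e = e \<longleftrightarrow> int (lab e) = (int (lab e) + l) mod int (K e)"
    using rot_eqI[OF e, of e l] rot_spec[OF e, of l] by (auto simp: EB_iff e)
  ultimately show ?thesis by simp
qed

lemma rot_0: "e \<in> E1 \<Longrightarrow> rot 0 e = e"
  by (simp add: rot_fixed_iff)

lemma rot_edge_eq_rot: "rot_edge E1 r s lab e = rot 1 e"
proof -
  have "(int (lab e) + 1) mod int (K e) = int ((lab e + 1) mod K e)"
    by (simp add: zmod_int ac_simps)
  then show ?thesis by (simp add: rot_edge_def rot_def)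
qed

abbreviation "IP \<equiv> inf_paths E1 r s"
abbreviation "GG \<equiv> graph_groupoid E1 r s"
abbreviation "\<alpha> \<equiv> alpha_G E1 r s lab"

lemma rot_comp_inf_path: "x \<in> IP \<Longrightarrow> rot l \<circ> x \<in> IP"
  unfolding inf_paths_def by simp

lemma path_map_rot_in_groupoid: "g \<in> GG \<Longrightarrow> path_map (rot l) g \<in> GG"
  unfolding mem_graph_groupoid by (auto simp: path_map_def shift_comp rot_comp_inf_path) metis

lemma path_map_cong:
  assumes "\<And>e. e \<in> E1 \<Longrightarrow> f e = h e" "g \<in> GG"
  shows "path_map f g = path_map h g"
  using assms unfolding mem_graph_groupoid inf_paths_def by (auto simp: path_map_def)

lemma path_map_rot_rot: "g \<in> GG \<Longrightarrow> path_map (rot l) (path_map (rot m) g) = path_map (rot (l + m)) g"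
  unfolding path_map_comp by (rule path_map_cong) (simp_all add: rot_rot)

lemma path_map_rot_0: "g \<in> GG \<Longrightarrow> path_map (rot 0) g = g"
  using path_map_cong[of "rot 0" id g] by (simp add: rot_0 path_map_def)

lemma alpha_eq_rot: "\<alpha> = path_map (rot 1)"
  unfolding alpha_G_eq_path_map rot_edge_eq_rot[abs_def] ..

lemma bij_betw_alpha: "bij_betw \<alpha> GG GG"
proof (rule bij_betw_byWitness[where f' = "path_map (rot (-1))"])
  show "\<forall>g\<in>GG. path_map (rot (-1)) (\<alpha> g) = g" "\<forall>g\<in>GG. \<alpha> (path_map (rot (-1)) g) = g"
    by (simp_all add: alpha_eq_rot path_map_rot_in_groupoid path_map_rot_rot path_map_rot_0)
  show "\<alpha> ` GG \<subseteq> GG" "path_map (rot (-1)) ` GG \<subseteq> GG"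
    by (auto simp: alpha_eq_rot path_map_rot_in_groupoid)
qed

lemma inv_alpha: "g \<in> GG \<Longrightarrow> inv_into GG \<alpha> g = path_map (rot (-1)) g"
  using bij_betw_alpha
  by (intro inv_into_f_eq)
    (auto simp: bij_betw_def alpha_eq_rot path_map_rot_in_groupoid path_map_rot_rot path_map_rot_0)

lemma funpow_path_map_rot:
  assumes "\<And>g. g \<in> GG \<Longrightarrow> \<phi> g = path_map (rot c) g" "g \<in> GG"
  shows "(\<phi> ^^ n) g = path_map (rot (c * int n)) g"
proof (induction n)
  case 0
  show ?case using assms(2) by (simp add: path_map_rot_0)
next
  case (Suc n)
  then show ?case
    using assms path_map_rot_in_groupoid path_map_rot_rot by (simp add: algebra_simps)
qed

lemma gpow_alpha: "g \<in> GG \<Longrightarrow> gpow GG \<alpha> l g = path_map (rot l) g"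
  using funpow_path_map_rot[of \<alpha> 1 g "nat l"]
    funpow_path_map_rot[OF inv_alpha, of g "nat (- l)"]
  by (simp add: gpow_def alpha_eq_rot)

lemma groupoid_automorphism_alpha: "groupoid_automorphism GG \<alpha>"
  using bij_betw_alpha
  by (simp add: groupoid_automorphism_def alpha_G_def gmult_def ginv_def)

abbreviation "FP \<equiv> fin_path E0 E1 r s"
abbreviation "TT \<equiv> groupoid_top E0 E1 r s"
abbreviation "Zsets \<equiv> {Zset E1 r s mu nu u | mu nu u. FP u mu \<and> FP u nu}"

text \<open>The unit-space part \<open>Z(\<nu>, \<nu>)\<close> of the basic open sets; the vertex \<open>w\<close> is the source
  of \<open>\<nu>\<close>, which only matters for \<open>\<nu> = []\<close>.\<close>

definition cylinder :: "'e list \<Rightarrow> 'v \<Rightarrow> ((nat \<Rightarrow> 'e) \<times> int \<times> (nat \<Rightarrow> 'e)) set" where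
  "cylinder nu w = {(p, 0, p) | p. p \<in> IP \<and> (\<forall>i<length nu. p i = nu ! i) \<and> r (p (length nu)) = w}"

abbreviation "cyl_at p n \<equiv> cylinder (map p [0..<n]) (r (p n))"

lemma pcat_inf_path:
  assumes "FP u mu" "z \<in> IP" "r (z 0) = u"
  shows "pcat mu z \<in> IP"
proof -
  have mu: "set mu \<subseteq> E1" "\<And>i. Suc i < length mu \<Longrightarrow> s (mu ! i) = r (mu ! Suc i)"
    "mu \<noteq> [] \<Longrightarrow> s (mu ! (length mu - 1)) = u"
    using assms(1) unfolding fin_path_def by (auto simp: last_conv_nth)
  have z: "z i \<in> E1" "s (z i) = r (z (Suc i))" for i using assms(2) unfolding inf_paths_def by auto
  have "s (pcat mu z i) = r (pcat mu z (Suc i))" for i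
  proof -
    consider "Suc i < length mu" | "Suc i = length mu" | "length mu \<le> i" by linarith
    then show ?thesis
    proof cases
      case 2
      then have "mu \<noteq> []" "i = length mu - 1" by auto
      then show ?thesis using mu(3) assms(3) by (simp add: pcat_def)
    qed (use mu(2) z(2) in \<open>auto simp: pcat_def Suc_diff_le\<close>)
  qed
  moreover have "pcat mu z i \<in> E1" for i using mu(1) z(1) by (auto simp: pcat_def)
  ultimately show ?thesis unfolding inf_paths_def by simp
qed

lemma shift_inf_path: "x \<in> IP \<Longrightarrow> shift m x \<in> IP"
  unfolding inf_paths_def shift_def by auto

lemma fin_path_prefix:
  assumes "p \<in> IP"
  shows "FP (r (p n)) (map p [0..<n])"
proof -
  have p: "p i \<in> E1" "s (p i) = r (p (Suc i))" for i using assms unfolding inf_paths_def by auto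
  have "r (p n) \<in> E0" using edge_level[OF p(1)] by blast
  moreover have "s (last (map p [0..<n])) = r (p n)" if "n > 0"
    using that p(2)[of "n - 1"] by (simp add: last_map)
  ultimately show ?thesis using p unfolding fin_path_def by auto
qed

lemma Zset_subset_groupoid:
  assumes "FP u mu" "FP u nu"
  shows "Zset E1 r s mu nu u \<subseteq> GG"
proof
  fix g assume "g \<in> Zset E1 r s mu nu u"
  then obtain z where z: "g = (pcat mu z, int (length mu) - int (length nu), pcat nu z)"
    "z \<in> IP" "r (z 0) = u" unfolding Zset_def by blast
  have "shift (length mu) (pcat mu z) = shift (length nu) (pcat nu z)" by (simp add: shift_pcat)
  then show "g \<in> GG"
    unfolding mem_graph_groupoid using z pcat_inf_path[OF assms(1)] pcat_inf_path[OF assms(2)]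
      by auto
qed

lemma topspace_groupoid_top: "topspace TT = GG"
proof
  show "topspace TT \<subseteq> GG" using Zset_subset_groupoid by (auto simp: groupoid_top_def)
  show "GG \<subseteq> topspace TT"
  proof
    fix g assume "g \<in> GG"
    then obtain x k y m n where g: "g = (x, k, y)" "x \<in> IP" "y \<in> IP" "k = int m - int n"
      and xy: "shift m x = shift n y" unfolding mem_graph_groupoid by (cases g) auto
    have xy_at: "x (i + m) = y (i + n)" for i using fun_cong[OF xy, of i] by (simp add: shift_def)
    have "pcat (map y [0..<n]) (shift m x) i = y i" for i
      using xy_at[of "i - n"] by (cases "i < n") (auto simp: pcat_def shift_def)
    then have "pcat (map x [0..<m]) (shift m x) = x" "pcat (map y [0..<n]) (shift m x) = y"
      by (auto simp: pcat_def shift_def fun_eq_iff)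
    then have "g \<in> Zset E1 r s (map x [0..<m]) (map y [0..<n]) (r (x m))"
      unfolding Zset_def using g shift_inf_path[OF g(2)] by (force simp: shift_def)
    moreover have "FP (r (x m)) (map x [0..<m])" by (rule fin_path_prefix[OF g(2)])
    moreover have "FP (r (x m)) (map y [0..<n])" using fin_path_prefix[OF g(3), of n] xy_at[of 0]
      by simp
    ultimately have "g \<in> \<Union>Zsets" by blast
    then show "g \<in> topspace TT" by (simp add: groupoid_top_def)
  qed
qed

lemma Zset_diagonal: "FP u mu \<Longrightarrow> Zset E1 r s mu mu u = cylinder mu u"
proof (intro subset_antisym subsetI)
  fix g assume mu: "FP u mu" and "g \<in> Zset E1 r s mu mu u"
  then obtain z where "g = (pcat mu z, 0, pcat mu z)" "z \<in> IP" "r (z 0) = u"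
    unfolding Zset_def by auto
  then show "g \<in> cylinder mu u"
    unfolding cylinder_def using pcat_inf_path[OF mu] by (auto simp: pcat_def)
next
  fix g assume "g \<in> cylinder mu u"
  then obtain p where p: "g = (p, 0, p)" "p \<in> IP" "\<forall>i<length mu. p i = mu ! i"
    "r (p (length mu)) = u"
    unfolding cylinder_def by auto
  then have "pcat mu (shift (length mu) p) = p" by (auto simp: pcat_def shift_def fun_eq_iff)
  then show "g \<in> Zset E1 r s mu mu u"
    unfolding Zset_def using p shift_inf_path[OF p(2)]
    by (intro CollectI exI[of _ "shift (length mu) p"]) (simp add: shift_def)
qed

lemma unit_in_Zset:
  assumes "(p, 0, p) \<in> Zset E1 r s mu nu u"
  shows "mu = nu"
proof -
  obtain z where "(p, 0, p) = (pcat mu z, int (length mu) - int (length nu), pcat nu z)"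
    using assms unfolding Zset_def by blast
  then have "p = pcat mu z" "p = pcat nu z" "length mu = length nu" by auto
  then have eq: "pcat mu z i = pcat nu z i" for i by simp
  show ?thesis
  proof (rule nth_equalityI)
    fix i assume "i < length mu"
    then show "mu ! i = nu ! i" using eq[of i] \<open>length mu = length nu\<close> by (simp add: pcat_def)
  qed fact
qed

lemma cylinder_eq_cyl_at: "(q, 0, q) \<in> cylinder nu w \<Longrightarrow> cylinder nu w = cyl_at q (length nu)"
  unfolding cylinder_def by (auto intro!: nth_equalityI)

lemma cylinder_nonempty: "cylinder nu w \<noteq> {} \<Longrightarrow> \<exists>q. (q, 0, q) \<in> cylinder nu w"
  unfolding cylinder_def by blast

lemma cyl_at_self: "p \<in> IP \<Longrightarrow> (p, 0, p) \<in> cyl_at p n"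
  unfolding cylinder_def by auto

lemma cyl_at_mono: "n \<le> N \<Longrightarrow> cyl_at p N \<subseteq> cyl_at p n"
  unfolding cylinder_def by (auto simp: le_less)

lemma cylinder_subset_units: "cylinder nu w \<subseteq> gunits E1 r s"
  unfolding cylinder_def gunits_def by auto

lemma open_contains_cyl_at:
  assumes "openin TT U" "(p, 0, p) \<in> U" "p \<in> IP"
  shows "\<exists>n. cyl_at p n \<subseteq> U"
proof -
  have "generate_topology_on Zsets U" using assms(1)
    by (simp add: groupoid_top_def openin_topology_generated_by)
  then show ?thesis using assms(2)
  proof (induction rule: generate_topology_on.induct)
    case (Int a b)
    then obtain n1 n2 where "cyl_at p n1 \<subseteq> a" "cyl_at p n2 \<subseteq> b" by auto
    then have "cyl_at p (max n1 n2) \<subseteq> a \<inter> b"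
      using cyl_at_mono[of n1 "max n1 n2" p] cyl_at_mono[of n2 "max n1 n2" p] by auto
    then show ?case by blast
  next
    case (Basis Z)
    then obtain mu u where Z: "Z = cylinder mu u"
      using unit_in_Zset Zset_diagonal by blast
    then have "cylinder mu u = cyl_at p (length mu)" using Basis.prems cylinder_eq_cyl_at by simp
    then show ?case using Z by blast
  next
    case (UN \<K>)
    then obtain k n where "k \<in> \<K>" "cyl_at p n \<subseteq> k" by blast
    then show ?case by blast
  qed auto
qed

lemma fin_path_rot: "FP u mu \<Longrightarrow> FP u (map (rot l) mu)"
  unfolding fin_path_def by (auto simp: subset_iff last_map)

lemma rot_comp_cancel: "x \<in> IP \<Longrightarrow> rot (-l) \<circ> (rot l \<circ> x) = x"
  unfolding inf_paths_def by (simp add: fun_eq_iff rot_rot rot_0)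

lemma map_rot_cancel: "FP u mu \<Longrightarrow> map (rot l) (map (rot (-l)) mu) = mu"
  unfolding fin_path_def by (auto simp: subset_iff rot_rot rot_0 intro: map_idI)

lemma path_map_rot_preimage:
  assumes "FP u mu" "FP u nu"
  shows "path_map (rot l) -` Zset E1 r s mu nu u \<inter> GG =
         Zset E1 r s (map (rot (-l)) mu) (map (rot (-l)) nu) u"
proof (intro subset_antisym subsetI)
  fix g assume g: "g \<in> path_map (rot l) -` Zset E1 r s mu nu u \<inter> GG"
  obtain a k b where abk: "g = (a, k, b)" by (cases g)
  with g have "a \<in> IP" "b \<in> IP" "(rot l \<circ> a, k, rot l \<circ> b) \<in> Zset E1 r s mu nu u"
    by (auto simp: mem_graph_groupoid path_map_def)
  then obtain z where g: "a \<in> IP" "b \<in> IP" "z \<in> IP" "r (z 0) = u"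
    and "(rot l \<circ> a, k, rot l \<circ> b) = (pcat mu z, int (length mu) - int (length nu), pcat nu z)"
    unfolding Zset_def by blast
  then have "a = pcat (map (rot (-l)) mu) (rot (-l) \<circ> z)"
    "b = pcat (map (rot (-l)) nu) (rot (-l) \<circ> z)"
    "k = int (length mu) - int (length nu)"
    using rot_comp_cancel[of a l] rot_comp_cancel[of b l] by (auto simp: comp_pcat[symmetric])
  moreover have "rot (-l) \<circ> z \<in> IP" "r ((rot (-l) \<circ> z) 0) = u"
    using g by (auto simp: rot_comp_inf_path inf_paths_def)
  ultimately show "g \<in> Zset E1 r s (map (rot (-l)) mu) (map (rot (-l)) nu) u"
    unfolding Zset_def abk by auto
next
  fix g assume g: "g \<in> Zset E1 r s (map (rot (-l)) mu) (map (rot (-l)) nu) u"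
  then have "g \<in> GG" using Zset_subset_groupoid fin_path_rot assms by blast
  obtain z where z: "g = (pcat (map (rot (-l)) mu) z, int (length mu) - int (length nu),
      pcat (map (rot (-l)) nu) z)" "z \<in> IP" "r (z 0) = u"
    using g unfolding Zset_def by auto
  have "path_map (rot l) g =
      (pcat mu (rot l \<circ> z), int (length mu) - int (length nu), pcat nu (rot l \<circ> z))"
    by (simp add: z(1) path_map_def comp_pcat map_rot_cancel[OF assms(1)]
        map_rot_cancel[OF assms(2)] del: map_map)
  moreover have "rot l \<circ> z \<in> IP" "r ((rot l \<circ> z) 0) = u"
    using z by (auto simp: rot_comp_inf_path inf_paths_def)
  ultimately show "g \<in> path_map (rot l) -` Zset E1 r s mu nu u \<inter> GG"
    using \<open>g \<in> GG\<close> unfolding Zset_def by auto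
qed

lemma continuous_map_path_map_rot: "continuous_map TT TT (path_map (rot l))"
  unfolding groupoid_top_def
proof (rule continuous_on_generated_topo)
  fix Z assume "Z \<in> Zsets"
  then obtain mu nu u where Z: "Z = Zset E1 r s mu nu u" "FP u mu" "FP u nu" by blast
  moreover have "Zset E1 r s (map (rot (-l)) mu) (map (rot (-l)) nu) u \<in> Zsets"
    using fin_path_rot Z by blast
  ultimately have "path_map (rot l) -` Z \<inter> topspace TT \<in> Zsets"
    using path_map_rot_preimage[OF Z(2,3)] topspace_groupoid_top by simp
  then show "openin (topology_generated_by Zsets)
      (path_map (rot l) -` Z \<inter> topspace (topology_generated_by Zsets))"
    by (simp add: groupoid_top_def topology_generated_by_Basis)
next
  show "path_map (rot l) ` topspace (topology_generated_by Zsets) \<subseteq> \<Union>Zsets"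
    using topspace_groupoid_top path_map_rot_in_groupoid by (auto simp: groupoid_top_def)
qed

lemma homeomorphic_map_alpha: "homeomorphic_map TT TT \<alpha>"
  unfolding alpha_eq_rot homeomorphic_map_maps homeomorphic_maps_def
  by (intro exI[of _ "path_map (rot (-1))"])
    (simp add: continuous_map_path_map_rot topspace_groupoid_top path_map_rot_rot path_map_rot_0)

lemma path_level: "p \<in> IP \<Longrightarrow> r (p 0) \<in> V c \<Longrightarrow> r (p i) \<in> V (c + i)"
proof (induction i)
  case (Suc i)
  have e: "p i \<in> E1" "s (p i) = r (p (Suc i))" using Suc.prems(1) unfolding inf_paths_def by auto
  then obtain n where "r (p i) \<in> V n" "s (p i) \<in> V (Suc n)" using edge_level by blast
  with Suc have "n = c + i" using level_unique by blast
  with \<open>s (p i) \<in> V (Suc n)\<close> e(2) show ?case by simp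
qed simp

lemma K_inf_path_gt: "p \<in> IP \<Longrightarrow> K (p j) > j"
proof -
  assume p: "p \<in> IP"
  then have "p 0 \<in> E1" "p j \<in> E1" unfolding inf_paths_def by auto
  then obtain c n where c: "r (p 0) \<in> V c" and n: "r (p j) \<in> V n" "s (p j) \<in> V (Suc n)"
    using edge_level by meson
  have "n = c + j" using level_unique[OF n(1) path_level[OF p c]] .
  with big[OF n] show ?thesis by simp
qed

lemma shift_eq_same_vertices:
  assumes "p \<in> IP" "\<And>i. r (q i) = r (p i)" "shift m p = shift n q"
  shows "m = n"
proof -
  obtain c where c: "r (p 0) \<in> V c" using assms(1) edge_level unfolding inf_paths_def by blast
  have "r (p m) = r (p n)" using fun_cong[OF assms(3), of 0] assms(2) by (simp add: shift_def)
  then have "r (p n) \<in> V (c + m)" using path_level[OF assms(1) c, of m] by simp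
  then have "c + m = c + n" by (rule level_unique) (rule path_level[OF assms(1) c])
  then show ?thesis by simp
qed

lemma orbit_eq_imp_shift_eq:
  assumes "(p, 0, p) \<in> GG" "gorbit GG (p, 0, p) = gorbit GG (q, 0, q)"
  shows "\<exists>m n. shift m p = shift n q"
proof -
  have "(p, 0, p) \<in> gorbit GG (p, 0, p)"
    unfolding gorbit_def using assms(1)
    by (intro CollectI exI[of _ "(p, 0, p)"]) (simp add: grange_def gsource_def)
  then have "(p, 0, p) \<in> gorbit GG (q, 0, q)" using assms(2) by simp
  then obtain g where "g \<in> GG" "gsource g = (q, 0, q)" "grange g = (p, 0, p)"
    unfolding gorbit_def by auto
  moreover obtain a k b where "g = (a, k, b)" by (cases g)
  ultimately show ?thesis by (auto simp: mem_graph_groupoid gsource_def grange_def)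
qed

lemma alpha_wandering:
  assumes "x \<in> gunits E1 r s" "gorbit GG x = gorbit GG (gpow GG \<alpha> l x)"
  shows "l = 0"
proof -
  obtain p where x: "x = (p, 0, p)" "p \<in> IP" using assms(1) unfolding gunits_def by auto
  then have "x \<in> GG" by (auto simp: mem_graph_groupoid)
  then have "gpow GG \<alpha> l x = (rot l \<circ> p, 0, rot l \<circ> p)" by (simp add: gpow_alpha x path_map_def)
  then have "gorbit GG (p, 0, p) = gorbit GG (rot l \<circ> p, 0, rot l \<circ> p)" using assms(2) x(1) by simp
  then obtain m n where sh: "shift m p = shift n (rot l \<circ> p)"
    using orbit_eq_imp_shift_eq \<open>x \<in> GG\<close> x(1) by blast
  have E: "p i \<in> E1" for i using x(2) unfolding inf_paths_def by auto
  then have "m = n" using shift_eq_same_vertices[OF x(2) _ sh] by simp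
  define j where "j = nat \<bar>l\<bar> + m"
  have "rot l (p j) = p j" using fun_cong[OF sh, of "nat \<bar>l\<bar>"] \<open>m = n\<close>
    by (simp add: shift_def j_def)
  then have "int (K (p j)) dvd l" using rot_fixed_iff E by blast
  moreover have "nat \<bar>l\<bar> < K (p j)" using K_inf_path_gt[OF x(2), of j] by (simp add: j_def)
  then have "\<bar>l\<bar> < int (K (p j))" by (simp add: nat_less_iff)
  ultimately show "l = 0" using dvd_imp_le_int[of l "int (K (p j))"] by force
qed

lemma cylinder_subset_groupoid: "FP u mu \<Longrightarrow> cylinder mu u \<subseteq> GG"
  using Zset_diagonal Zset_subset_groupoid by blast

lemma cylinder_shrink:
  assumes mu: "FP u mu"
  shows "\<exists>l::int. l \<ge> 1 \<and> gpow GG \<alpha> (- l) ` cylinder mu u \<subseteq> cylinder mu u"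
proof (intro exI conjI)
  define L where "L = int (prod_list (map K mu))"
  have E: "set mu \<subseteq> E1" using mu unfolding fin_path_def by blast
  then have "0 \<notin> set (map K mu)" using K_pos by fastforce
  then have "prod_list (map K mu) \<noteq> 0" by (simp add: prod_list_zero_iff)
  then show "L \<ge> 1" by (simp add: L_def)
  show "gpow GG \<alpha> (- L) ` cylinder mu u \<subseteq> cylinder mu u"
  proof
    fix g assume "g \<in> gpow GG \<alpha> (- L) ` cylinder mu u"
    then obtain p where p: "g = gpow GG \<alpha> (- L) (p, 0, p)" "(p, 0, p) \<in> cylinder mu u"
      unfolding cylinder_def by auto
    then have "p \<in> IP" "\<forall>i<length mu. p i = mu ! i" "r (p (length mu)) = u"
      unfolding cylinder_def by auto
    moreover have "rot (- L) (mu ! i) = mu ! i" if "i < length mu" for i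
      using that E by (subst rot_fixed_iff) (auto simp: L_def intro: prod_list_dvd)
    moreover have "g = (rot (- L) \<circ> p, 0, rot (- L) \<circ> p)"
      using p cylinder_subset_groupoid[OF mu] by (auto simp: gpow_alpha path_map_def)
    ultimately show "g \<in> cylinder mu u"
      unfolding cylinder_def by (auto simp: rot_comp_inf_path inf_paths_def)
  qed
qed

lemma row_finite: "w \<in> E0 \<Longrightarrow> finite {e \<in> E1. r e = w}"
  using bratteli unfolding bratteli_diagram_def by blast

lemma cylinder_split: "cylinder nu w \<subseteq> (\<Union>e\<in>{e \<in> E1. r e = w}. cylinder (nu @ [e]) (s e))"
proof
  fix g assume "g \<in> cylinder nu w"
  then obtain p where p: "g = (p, 0, p)" "p \<in> IP" "\<forall>i<length nu. p i = nu ! i"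
    "r (p (length nu)) = w"
    unfolding cylinder_def by auto
  define e where "e = p (length nu)"
  have "e \<in> E1" "s e = r (p (Suc (length nu)))"
    using p(2) unfolding inf_paths_def e_def by auto
  moreover have "\<forall>i<length (nu @ [e]). p i = (nu @ [e]) ! i"
    using p(3) by (auto simp: nth_append less_Suc_eq e_def)
  ultimately have "g \<in> cylinder (nu @ [e]) (s e)"
    unfolding cylinder_def using p(1,2) by auto
  then show "g \<in> (\<Union>e\<in>{e \<in> E1. r e = w}. cylinder (nu @ [e]) (s e))"
    using \<open>e \<in> E1\<close> p(4) e_def by blast
qed

lemma cylinder_snoc: "(q, 0, q) \<in> cylinder (nu @ [e]) w' \<Longrightarrow> (q, 0, q) \<in> cylinder nu (r e)"
  unfolding cylinder_def by (auto simp: nth_append)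

lemma not_finitely_covered_extend:
  assumes "w \<in> E0" "\<not> finitely_covered \<U> (cylinder nu w)"
  shows "\<exists>e\<in>E1. r e = w \<and> \<not> finitely_covered \<U> (cylinder (nu @ [e]) (s e))"
proof (rule ccontr)
  assume "\<not> ?thesis"
  then have "finitely_covered \<U> (\<Union>e\<in>{e \<in> E1. r e = w}. cylinder (nu @ [e]) (s e))"
    by (intro finitely_covered_UN[OF row_finite[OF assms(1)]]) blast
  then show False using assms(2) finitely_covered_mono[OF cylinder_split] by blast
qed

lemma nested_cylinders_limit:
  assumes "f 0 \<in> IP" "\<And>n. (f (Suc n), 0, f (Suc n)) \<in> cyl_at (f n) (L + n)"
  shows "\<exists>p. \<forall>n. (p, 0, p) \<in> cyl_at (f n) (L + n)"
proof -
  have nested: "(f m, 0, f m) \<in> cyl_at (f n) (L + n)" if "n \<le> m" for m n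
    using that
  proof (induction m rule: dec_induct)
    case base
    have "f n \<in> IP" using assms unfolding cylinder_def by (cases n) auto
    then show ?case by (rule cyl_at_self)
  next
    case (step m)
    then have "cyl_at (f n) (L + n) = cyl_at (f m) (L + n)"
      using cylinder_eq_cyl_at[OF step.IH] by simp
    moreover have "(f (Suc m), 0, f (Suc m)) \<in> cyl_at (f m) (L + n)"
      using assms(2)[of m] cyl_at_mono[of "L + n" "L + m" "f m"] step.hyps by auto
    ultimately show ?case by simp
  qed
  have agree: "f m i = f n i" if "n \<le> m" "i < L + n" for m n i
    using nested[OF that(1)] that(2) unfolding cylinder_def by auto
  have agree_vertex: "r (f m (L + n)) = r (f n (L + n))" if "n \<le> m" for m n
    using nested[OF that] unfolding cylinder_def by auto
  define p where "p i = f (Suc i) i" for i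
  have p_eq: "p i = f n i" if "i < L + n" for i n
    using agree[of n "max n (Suc i)" i] agree[of "Suc i" "max n (Suc i)" i] that
    by (simp add: p_def)
  have "p \<in> IP" unfolding inf_paths_def
  proof (intro CollectI conjI allI)
    fix i
    have "f (Suc (Suc i)) \<in> IP" using nested[of 0 "Suc (Suc i)"] unfolding cylinder_def by auto
    moreover have "p i = f (Suc (Suc i)) i" "p (Suc i) = f (Suc (Suc i)) (Suc i)"
      by (simp_all add: p_eq)
    ultimately show "p i \<in> E1" "s (p i) = r (p (Suc i))" unfolding inf_paths_def by auto
  qed
  moreover have "r (p (L + n)) = r (f n (L + n))" for n
    using agree_vertex[of n "Suc (L + n)"] by (simp add: p_def)
  ultimately have "(p, 0, p) \<in> cyl_at (f n) (L + n)" for n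
    unfolding cylinder_def using p_eq[of _ n] by auto
  then show ?thesis by blast
qed

lemma not_finitely_covered_branch:
  assumes "\<not> finitely_covered \<U> (cylinder mu u)"
  shows "\<exists>p. (p, 0, p) \<in> cylinder mu u \<and> (\<forall>n. \<not> finitely_covered \<U> (cyl_at p (length mu + n)))"
proof -
  let ?L = "length mu"
  define P where "P n q \<longleftrightarrow> (q, 0, q) \<in> cylinder mu u \<and> \<not> finitely_covered \<U> (cyl_at q (?L + n))"
    for n q
  have "\<exists>q. P 0 q"
  proof -
    have "cylinder mu u \<noteq> {}" using assms finitely_covered_empty by metis
    then obtain q where "(q, 0, q) \<in> cylinder mu u" using cylinder_nonempty by blast
    then show ?thesis using assms cylinder_eq_cyl_at unfolding P_def by auto
  qed
  moreover have "\<exists>q'. P (Suc n) q' \<and> (q', 0, q') \<in> cyl_at q (?L + n)" if "P n q" for n q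
  proof -
    let ?N = "?L + n"
    have q: "(q, 0, q) \<in> cylinder mu u" "q \<in> IP" "\<not> finitely_covered \<U> (cyl_at q ?N)"
      using that unfolding P_def cylinder_def by auto
    then have "r (q ?N) \<in> E0" using edge_level unfolding inf_paths_def by blast
    then obtain e where e: "r e = r (q ?N)"
      "\<not> finitely_covered \<U> (cylinder (map q [0..<?N] @ [e]) (s e))"
      using not_finitely_covered_extend q(3) by blast
    then have "cylinder (map q [0..<?N] @ [e]) (s e) \<noteq> {}" using finitely_covered_empty by metis
    then obtain q' where q': "(q', 0, q') \<in> cylinder (map q [0..<?N] @ [e]) (s e)"
      using cylinder_nonempty by blast
    have "cylinder (map q [0..<?N] @ [e]) (s e) = cyl_at q' (?L + Suc n)"
      using cylinder_eq_cyl_at[OF q'] by simp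
    moreover have "(q', 0, q') \<in> cyl_at q ?N" using cylinder_snoc[OF q'] e(1) by simp
    moreover have "cyl_at q ?N \<subseteq> cylinder mu u"
      using cyl_at_mono[of ?L ?N q] cylinder_eq_cyl_at[OF q(1)] by simp
    ultimately show ?thesis using e(2) unfolding P_def by auto
  qed
  ultimately obtain f where f: "\<And>n. P n (f n)"
    "\<And>n. (f (Suc n), 0, f (Suc n)) \<in> cyl_at (f n) (?L + n)"
    using dependent_nat_choice[of P "\<lambda>n q q'. (q', 0, q') \<in> cyl_at q (?L + n)"] by blast
  have "f 0 \<in> IP" using f(1)[of 0] unfolding P_def cylinder_def by auto
  then obtain p where p: "\<And>n. (p, 0, p) \<in> cyl_at (f n) (?L + n)"
    using nested_cylinders_limit f(2) by blast
  have "cyl_at (f n) (?L + n) = cyl_at p (?L + n)" for n using cylinder_eq_cyl_at[OF p[of n]]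
    by simp
  moreover have "cyl_at (f 0) ?L = cylinder mu u"
    using f(1)[of 0] cylinder_eq_cyl_at[of "f 0" mu u] unfolding P_def by simp
  ultimately show ?thesis using p[of 0] f(1) unfolding P_def by auto
qed

lemma compactin_cylinder:
  assumes "FP u mu"
  shows "compactin TT (cylinder mu u)"
  unfolding compactin_iff_finitely_covered
proof (intro conjI allI impI)
  show "cylinder mu u \<subseteq> topspace TT"
    using cylinder_subset_groupoid[OF assms] topspace_groupoid_top by simp
  fix \<U> assume \<U>: "(\<forall>U\<in>\<U>. openin TT U) \<and> cylinder mu u \<subseteq> \<Union>\<U>"
  show "finitely_covered \<U> (cylinder mu u)"
  proof (rule ccontr)
    assume "\<not> finitely_covered \<U> (cylinder mu u)"
    then obtain p where p: "(p, 0, p) \<in> cylinder mu u"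
      and bad: "\<And>n. \<not> finitely_covered \<U> (cyl_at p (length mu + n))"
      using not_finitely_covered_branch by blast
    then obtain U where "U \<in> \<U>" "(p, 0, p) \<in> U" "p \<in> IP" using \<U> unfolding cylinder_def by blast
    moreover obtain n where "cyl_at p n \<subseteq> U"
      using open_contains_cyl_at \<U> calculation by blast
    ultimately have "finitely_covered \<U> (cyl_at p (length mu + n))"
      using cyl_at_mono[of n "length mu + n" p] finitely_covered_subset
        by (meson le_add2 order_trans)
    then show False using bad by blast
  qed
qed

definition cylinders :: "((nat \<Rightarrow> 'e) \<times> int \<times> (nat \<Rightarrow> 'e)) set set" where
  "cylinders = {cylinder mu u | mu u. FP u mu}"

lemma openin_cylinder: "FP u mu \<Longrightarrow> openin TT (cylinder mu u)"
  unfolding Zset_diagonal[symmetric] groupoid_top_def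
  by (rule topology_generated_by_Basis) blast

lemma open_units_Union_cylinders:
  assumes "openin (subtopology TT (gunits E1 r s)) U"
  shows "\<exists>\<C>\<subseteq>cylinders. \<Union>\<C> = U"
proof (intro exI conjI)
  obtain W where W: "openin TT W" "U = W \<inter> gunits E1 r s"
    using assms unfolding openin_subtopology by blast
  show "{C \<in> cylinders. C \<subseteq> U} \<subseteq> cylinders" by blast
  have "g \<in> \<Union>{C \<in> cylinders. C \<subseteq> U}" if "g \<in> U" for g
  proof -
    have "g \<in> W" "g \<in> gunits E1 r s" using that W(2) by auto
    then obtain p where p: "g = (p, 0, p)" "p \<in> IP" "g \<in> W" unfolding gunits_def by blast
    then obtain n where "cyl_at p n \<subseteq> W" using open_contains_cyl_at W(1) by blast
    then have "cyl_at p n \<subseteq> U" using W(2) cylinder_subset_units by blast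
    moreover have "cyl_at p n \<in> cylinders" using fin_path_prefix[OF p(2)] unfolding cylinders_def
      by blast
    ultimately show ?thesis using cyl_at_self[OF p(2)] p(1) by blast
  qed
  then show "\<Union>{C \<in> cylinders. C \<subseteq> U} = U" by blast
qed

end

theorem lemma6p3:
  fixes V :: "nat \<Rightarrow> 'v set" and E1 :: "'e set" and r s :: "'e \<Rightarrow> 'v"
    and lab :: "'e \<Rightarrow> nat"
  assumes bd: "bratteli_diagram V E1 r s"
    and big: "\<And>n v w. v \<in> V n \<Longrightarrow> w \<in> V (Suc n) \<Longrightarrow> kk E1 r s v w > n"
    and labelling: "\<And>n v w. v \<in> V n \<Longrightarrow> w \<in> V (Suc n) \<Longrightarrow>
                       bij_betw lab (edges_between E1 r s v w) {..<kk E1 r s v w}"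
  defines "G \<equiv> graph_groupoid E1 r s"
    and "T \<equiv> groupoid_top (\<Union>n. V n) E1 r s"
    and "G0 \<equiv> gunits E1 r s"
    and "\<alpha> \<equiv> alpha_G E1 r s lab"
  shows "groupoid_automorphism G \<alpha> \<and> homeomorphic_map T T \<alpha> \<and>
         (\<forall>x\<in>G0. \<forall>l::int. gorbit G x = gorbit G (gpow G \<alpha> l x) \<longrightarrow> l = 0) \<and>
         (\<exists>\<B>. (\<forall>B\<in>\<B>. B \<subseteq> G0 \<and> openin T B \<and> compactin T B \<and> bisection G B) \<and>
              (\<forall>U. openin (subtopology T G0) U \<longrightarrow> (\<exists>\<B>'\<subseteq>\<B>. \<Union>\<B>' = U)) \<and>
              (\<forall>B\<in>\<B>. \<exists>l::int. l \<ge> 1 \<and> gpow G \<alpha> (- l) ` B \<subseteq> B))"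
proof -
  interpret bratteli_rotation V E1 r s lab
    using bd big labelling by unfold_locales
  show ?thesis
  proof (intro conjI exI[of _ cylinders] ballI)
    show "groupoid_automorphism G \<alpha>"
      unfolding G_def \<alpha>_def by (rule groupoid_automorphism_alpha)
    show "homeomorphic_map T T \<alpha>"
      unfolding T_def \<alpha>_def by (rule homeomorphic_map_alpha)
    show "\<forall>l. gorbit G x = gorbit G (gpow G \<alpha> l x) \<longrightarrow> l = 0" if "x \<in> G0" for x
      using alpha_wandering that unfolding G_def G0_def \<alpha>_def by blast
    show "\<forall>U. openin (subtopology T G0) U \<longrightarrow> (\<exists>\<B>'\<subseteq>cylinders. \<Union>\<B>' = U)"
      using open_units_Union_cylinders unfolding T_def G0_def by blast
    fix B assume "B \<in> cylinders"
    then obtain mu u where B: "B = cylinder mu u" and mu: "FP u mu" unfolding cylinders_def by blast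
    show "B \<subseteq> G0" "openin T B" "compactin T B"
      unfolding B G0_def T_def
        by (simp_all add: cylinder_subset_units openin_cylinder[OF mu] compactin_cylinder[OF mu])
    show "bisection G B"
      unfolding B G_def
        by (rule bisection_of_units[OF cylinder_subset_groupoid[OF mu] cylinder_subset_units])
    show "\<exists>l::int. l \<ge> 1 \<and> gpow G \<alpha> (- l) ` B \<subseteq> B"
      unfolding B G_def \<alpha>_def by (rule cylinder_shrink[OF mu])
  qed
qed

end
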